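(* Let $\mathbf X$ be a random vector with values in $[0,\infty)^n$ such that $\mathbf X\in\mathrm{MRV}_\gamma(\Psi)$ for some $\gamma>0$ and some Borel probability measure $\Psi$ on $\Delta_n$, and suppose $\mathbf X$ has a strictly positive joint density on its support. Let $\mathbf w\in\Delta_n$ with $\eta_{\mathbf w}>0$, where $\eta_{\mathbf x}=\int_{\Delta_n}(\mathbf x^\top\mathbf s)^\gamma\,\Psi(\mathrm d\mathbf s)$ for $\mathbf x\in[0,\infty)^n$, and assume $\eta_{\mathbf e_i}>0$ for $i=1,\dots,n$. Then $$\lim_{\alpha\downarrow0}\mathrm{DQ}^{\mathrm{VaR}}_\alpha(\mathbf w\odot\mathbf X)=f(\mathbf w):=\frac{\eta_{\mathbf w}}{\left(\sum_{i=1}^nw_i\,\eta_{\mathbf e_i}^{1/\gamma}\right)^{\gamma}}.$$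
   Context: Let $(\Omega,\mathcal F,\mathbb P)$ be an atomless probability space. For $\alpha\in[0,1)$ and a random variable $X$, $\mathrm{VaR}_\alpha(X)=\inf\{x\in\mathbb R:\mathbb P(X\le x)\ge 1-\alpha\}$. For $\alpha\in(0,1)$ and $\mathbf X=(X_1,\dots,X_n)$, $\mathrm{DQ}^{\mathrm{VaR}}_\alpha(\mathbf X)=\alpha^*/\alpha$, where $\alpha^*=\inf\{\beta\in(0,1):\mathrm{VaR}_\beta(\sum_{i=1}^nX_i)\le\sum_{i=1}^n\mathrm{VaR}_\alpha(X_i)\}$, with $\inf\emptyset=1$. $\Delta_n=\{\mathbf x\in[0,1]^n:x_1+\dots+x_n=1\}$ (the unit $L_1$-sphere intersected with the nonnegative orthant), $\mathbf e_1,\dots,\mathbf e_n$ are the standard basis vectors, and $\mathbf w\odot\mathbf X=(w_1X_1,\dots,w_nX_n)$. A random vector $\mathbf X$ with values in $[0,\infty)^n$ is multivariate regularly varying with tail index $\gamma>0$ and spectral measure $\Psi$ (a Borel probability measure on $\Delta_n$), written $\mathbf X\in\mathrm{MRV}_\gamma(\Psi)$, if for every $t>0$ and every Borel $S\subseteq\Delta_n$ with $\Psi(\partial S)=0$, $$\lim_{x\to\infty}\frac{\mathbb P(\|\mathbf X\|>tx,\ \mathbf X/\|\mathbf X\|\in S)}{\mathbb P(\|\mathbf X\|>x)}=t^{-\gamma}\Psi(S),$$ where $\|\cdot\|$ is the $L_1$-norm. *)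

theory Defs
  imports "HOL-Probability.Probability"
begin

definition VaR :: "'a measure \<Rightarrow> real \<Rightarrow> ('a \<Rightarrow> real) \<Rightarrow> real" where
  "VaR M \<alpha> Y = Inf {x. measure M {\<omega> \<in> space M. Y \<omega> \<le> x} \<ge> 1 - \<alpha>}"

definition DQ_VaR :: "'a measure \<Rightarrow> real \<Rightarrow> ('a \<Rightarrow> real ^ 'n) \<Rightarrow> real" where
  "DQ_VaR M \<alpha> Y =
     (let A = {\<beta> \<in> {0<..<1}. VaR M \<beta> (\<lambda>\<omega>. \<Sum>i\<in>UNIV. Y \<omega> $ i)
                              \<le> (\<Sum>i\<in>UNIV. VaR M \<alpha> (\<lambda>\<omega>. Y \<omega> $ i))}
      in (if A = {} then 1 else Inf A) / \<alpha>)"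

definition atomless :: "'a measure \<Rightarrow> bool" where
  "atomless M \<longleftrightarrow> (\<forall>A \<in> sets M. measure M A > 0 \<longrightarrow>
      (\<exists>B \<in> sets M. B \<subseteq> A \<and> 0 < measure M B \<and> measure M B < measure M A))"

definition unit_simplex :: "(real ^ 'n) set" where
  "unit_simplex = {x. (\<forall>i. 0 \<le> x $ i) \<and> (\<Sum>i\<in>UNIV. x $ i) = 1}"

definition L1norm :: "real ^ 'n \<Rightarrow> real" where
  "L1norm x = (\<Sum>i\<in>UNIV. \<bar>x $ i\<bar>)"

definition MRV :: "'a measure \<Rightarrow> ('a \<Rightarrow> real ^ 'n) \<Rightarrow> real \<Rightarrow> (real ^ 'n) measure \<Rightarrow> bool" where
  "MRV M X \<gamma> \<Psi> \<longleftrightarrow> 0 < \<gamma> \<and> prob_space \<Psi> \<and> sets \<Psi> = sets (restrict_space borel unit_simplex) \<and>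
     (\<forall>t > 0. \<forall>S \<in> sets \<Psi>. measure \<Psi> ((top_of_set unit_simplex) frontier_of S) = 0 \<longrightarrow>
        ((\<lambda>x. measure M {\<omega> \<in> space M. L1norm (X \<omega>) > t * x \<and> X \<omega> /\<^sub>R L1norm (X \<omega>) \<in> S}
              / measure M {\<omega> \<in> space M. L1norm (X \<omega>) > x})
          \<longlongrightarrow> t powr (-\<gamma>) * measure \<Psi> S) at_top)"

definition eta :: "(real ^ 'n) measure \<Rightarrow> real \<Rightarrow> real ^ 'n \<Rightarrow> real" where
  "eta \<Psi> \<gamma> x = (\<integral>s. (x \<bullet> s) powr \<gamma> \<partial>\<Psi>)"

definition support :: "'a measure \<Rightarrow> ('a \<Rightarrow> real ^ 'n) \<Rightarrow> (real ^ 'n) set" where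
  "support M X = {x. \<forall>e > 0. measure (distr M borel X) (ball x e) > 0}"

definition hadamard :: "real ^ 'n \<Rightarrow> ('a \<Rightarrow> real ^ 'n) \<Rightarrow> ('a \<Rightarrow> real ^ 'n)" where
  "hadamard w X = (\<lambda>\<omega>. \<chi> i. w $ i * X \<omega> $ i)"

end

theory Submission
  imports Defs
begin

(*
  Multivariate regular variation makes the tail of every nonnegative linear functional v . X
  asymptotically eta_v times the tail V of the radius ||X||: approximate theta |-> v . theta from
  below and above by step functions on bands of the simplex whose boundaries are Psi-null, and apply
  the defining limit band by band. So the weighted components w_i X_i and the portfolio w . X have
  tails ~ b V with b_i = w_i^gamma eta_(e_i) and b = eta_w.
  For tails of this kind, if b_k > 0, then alpha ~ b_k V(VaR_alpha(w_k X_k)) and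
  VaR_alpha(w_i X_i) / VaR_alpha(w_k X_k) -> (b_i / b_k)^(1/gamma). With c = Sum_i VaR_alpha(w_i X_i),
  the level alpha* lies between the tails of w . X at c + 1 and at c, and c / VaR_alpha(w_k X_k) tends
  to theta = Sum_i (b_i / b_k)^(1/gamma); hence alpha* / alpha -> eta_w theta^(-gamma) / b_k = f(w).
*)

section \<open>Value-at-Risk and the level \<open>\<alpha>*\<close>\<close>

definition tail :: "'a measure \<Rightarrow> ('a \<Rightarrow> real) \<Rightarrow> real \<Rightarrow> real" where
  "tail M Z x = measure M {\<omega>\<in>space M. x < Z \<omega>}"

lemma tail_nonneg: "0 \<le> tail M Z x"
  unfolding tail_def by simp

lemma tail_antimono:
  assumes "finite_measure M" "Z \<in> borel_measurable M"
  shows "antimono (tail M Z)"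
proof
  interpret finite_measure M by fact
  show "tail M Z y \<le> tail M Z x" if "x \<le> y" for x y
    unfolding tail_def using assms(2) that by (intro finite_measure_mono) auto
qed

lemma
  fixes Y :: "'a \<Rightarrow> real"
  assumes P: "prob_space M" and Y: "Y \<in> borel_measurable M" and nonneg: "\<forall>\<omega>\<in>space M. 0 \<le> Y \<omega>"
    and \<alpha>: "0 < \<alpha>" "\<alpha> < 1"
  shows VaR_nonneg: "0 \<le> VaR M \<alpha> Y"
    and tail_VaR_le: "tail M Y (VaR M \<alpha> Y) \<le> \<alpha>"
    and less_VaR_imp_tail_gt: "x < VaR M \<alpha> Y \<Longrightarrow> \<alpha> < tail M Y x"
proof -
  interpret prob_space M by fact
  interpret D: real_distribution "distr M borel Y" using Y by simp
  define F where "F x = measure M {\<omega>\<in>space M. Y \<omega> \<le> x}" for x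
  have cdf: "cdf (distr M borel Y) = F"
    unfolding cdf_def F_def fun_eq_iff using Y
    by (subst measure_distr) (auto intro!: arg_cong[where f="measure M"])
  have tail_eq: "tail M Y x = 1 - F x" for x
  proof -
    have "{\<omega>\<in>space M. x < Y \<omega>} = space M - {\<omega>\<in>space M. Y \<omega> \<le> x}" by auto
    then show ?thesis unfolding F_def tail_def using Y by (simp add: prob_compl)
  qed
  define Q where "Q = {x. 1 - \<alpha> \<le> F x}"
  have VaR: "VaR M \<alpha> Y = Inf Q" unfolding VaR_def Q_def F_def ..
  have Q_nonneg: "0 \<le> x" if "x \<in> Q" for x
  proof (rule ccontr)
    assume "\<not> 0 \<le> x"
    then have "{\<omega>\<in>space M. Y \<omega> \<le> x} = {}" using nonneg by force
    then have "F x = 0" unfolding F_def by (simp only: measure_empty)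
    with that \<alpha> show False unfolding Q_def by simp
  qed
  have "\<forall>\<^sub>F x in at_top. 1 - \<alpha> < F x"
    using D.cdf_lim_at_top_prob \<alpha> unfolding cdf by (auto intro: order_tendstoD)
  then obtain x0 where "1 - \<alpha> < F x0" unfolding eventually_at_top_linorder by blast
  then have Q_ne: "Q \<noteq> {}" unfolding Q_def by (auto intro: less_imp_le)
  have Q_bdd: "bdd_below Q" using Q_nonneg by (auto simp: bdd_below_def)
  show "0 \<le> VaR M \<alpha> Y" unfolding VaR using Q_ne Q_nonneg by (intro cInf_greatest) auto
  have "1 - \<alpha> \<le> F (Inf Q)"
  proof (rule tendsto_lowerbound)
    show "(F \<longlongrightarrow> F (Inf Q)) (at_right (Inf Q))"
      using D.cdf_is_right_cont[of "Inf Q"] unfolding cdf continuous_within .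
    have "1 - \<alpha> \<le> F x" if x: "Inf Q < x" for x
    proof -
      obtain y where "y \<in> Q" "y < x" using cInf_lessD[OF Q_ne x] by blast
      then show ?thesis using D.cdf_nondecreasing[of y x] unfolding cdf Q_def by simp
    qed
    then show "\<forall>\<^sub>F x in at_right (Inf Q). 1 - \<alpha> \<le> F x"
      unfolding eventually_at_right_field using gt_ex by blast
  qed simp
  then show "tail M Y (VaR M \<alpha> Y) \<le> \<alpha>" unfolding VaR tail_eq by simp
  assume "x < VaR M \<alpha> Y"
  then have "x \<notin> Q" using Q_bdd cInf_lower unfolding VaR by force
  then show "\<alpha> < tail M Y x" unfolding tail_eq Q_def by simp
qed

definition alpha_star :: "'a measure \<Rightarrow> real \<Rightarrow> ('a \<Rightarrow> real) \<Rightarrow> real" where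
  "alpha_star M c Z = (let A = {\<beta> \<in> {0<..<1}. VaR M \<beta> Z \<le> c} in if A = {} then 1 else Inf A)"

lemma DQ_VaR_eq_alpha_star:
  "DQ_VaR M \<alpha> Y =
     alpha_star M (\<Sum>i\<in>UNIV. VaR M \<alpha> (\<lambda>\<omega>. Y \<omega> $ i)) (\<lambda>\<omega>. \<Sum>i\<in>UNIV. Y \<omega> $ i) / \<alpha>"
  unfolding DQ_VaR_def alpha_star_def Let_def ..

lemma
  fixes Z :: "'a \<Rightarrow> real"
  assumes P: "prob_space M" and Z: "Z \<in> borel_measurable M" and nonneg: "\<forall>\<omega>\<in>space M. 0 \<le> Z \<omega>"
  shows alpha_star_le_tail: "alpha_star M c Z \<le> tail M Z c"
    and tail_le_alpha_star: "c < c' \<Longrightarrow> tail M Z c' \<le> alpha_star M c Z"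
proof -
  interpret prob_space M by fact
  define A where "A = {\<beta> \<in> {0<..<1}. VaR M \<beta> Z \<le> c}"
  have star: "alpha_star M c Z = (if A = {} then 1 else Inf A)" unfolding alpha_star_def A_def Let_def ..
  define p where "p = tail M Z c"
  have A_bdd: "bdd_below A" unfolding A_def bdd_below_def by (rule exI[of _ 0]) auto
  show "alpha_star M c Z \<le> p"
  proof (cases "p < 1")
    case True
    have sub: "{p<..<1} \<subseteq> A"
    proof
      fix \<beta> assume \<beta>: "\<beta> \<in> {p<..<1}"
      moreover have "0 \<le> p" unfolding p_def by (rule tail_nonneg)
      ultimately have "0 < \<beta>" "\<beta> < 1" by auto
      moreover have "VaR M \<beta> Z \<le> c"
        using less_VaR_imp_tail_gt[OF P Z nonneg \<open>0 < \<beta>\<close> \<open>\<beta> < 1\<close>, of c] \<beta> unfolding p_def by force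
      ultimately show "\<beta> \<in> A" unfolding A_def by simp
    qed
    have ne: "{p<..<1} \<noteq> {}" using True by simp
    then have "A \<noteq> {}" using sub by blast
    then have "alpha_star M c Z = Inf A" unfolding star by (rule if_not_P)
    also have "\<dots> \<le> Inf {p<..<1}" by (rule cInf_superset_mono[OF ne A_bdd sub])
    also have "\<dots> = p" using True by (simp add: cInf_greaterThanLessThan)
    finally show ?thesis .
  next
    case False
    have "Inf A < 1" if "\<beta> \<in> A" for \<beta>
      using cInf_lower[OF that A_bdd] that unfolding A_def by simp
    then show ?thesis using False unfolding star by (cases "A = {}") force+
  qed
  assume "c < c'"
  have "tail M Z c' \<le> \<beta>" if "\<beta> \<in> A" for \<beta>
  proof -
    have \<beta>: "0 < \<beta>" "\<beta> < 1" "VaR M \<beta> Z \<le> c" using that unfolding A_def by auto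
    have "tail M Z c' \<le> tail M Z (VaR M \<beta> Z)"
      using \<beta>(3) \<open>c < c'\<close> by (intro antimonoD[OF tail_antimono[OF finite_measure_axioms Z]]) simp
    also have "\<dots> \<le> \<beta>" by (rule tail_VaR_le[OF P Z nonneg \<beta>(1,2)])
    finally show ?thesis .
  qed
  then show "tail M Z c' \<le> alpha_star M c Z"
    unfolding star by (auto intro: cInf_greatest simp: tail_def)
qed

section \<open>Regularly varying tails\<close>

lemma tendsto_sandwich_approx:
  fixes r :: "'b \<Rightarrow> real"
  assumes "\<And>\<epsilon>. 0 < \<epsilon> \<Longrightarrow> \<exists>lo up fl fu. L - \<epsilon> \<le> lo \<and> up \<le> L + \<epsilon> \<and> (fl \<longlongrightarrow> lo) F \<and> (fu \<longlongrightarrow> up) F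
      \<and> (\<forall>\<^sub>F x in F. fl x \<le> r x \<and> r x \<le> fu x)"
  shows "(r \<longlongrightarrow> L) F"
proof (rule order_tendstoI)
  fix c assume "c < L"
  then obtain lo up :: real and fl fu where lo: "L - (L - c) / 2 \<le> lo" and fl: "(fl \<longlongrightarrow> lo) F"
    and between: "\<forall>\<^sub>F x in F. fl x \<le> r x \<and> r x \<le> fu x"
    using assms[of "(L - c) / 2"] by auto
  have "c < lo" using lo \<open>c < L\<close> by (simp add: field_simps)
  from order_tendstoD(1)[OF fl this] between show "\<forall>\<^sub>F x in F. c < r x"
    by eventually_elim auto
next
  fix c assume "L < c"
  then obtain lo up :: real and fl fu where up: "up \<le> L + (c - L) / 2" and fu: "(fu \<longlongrightarrow> up) F"
    and between: "\<forall>\<^sub>F x in F. fl x \<le> r x \<and> r x \<le> fu x"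
    using assms[of "(c - L) / 2"] by auto
  have "up < c" using up \<open>L < c\<close> by (simp add: field_simps)
  from order_tendstoD(2)[OF fu this] between show "\<forall>\<^sub>F x in F. r x < c"
    by eventually_elim auto
qed

lemma eventually_less_of_tendsto:
  fixes f g :: "'b \<Rightarrow> real"
  assumes "(f \<longlongrightarrow> a) F" "(g \<longlongrightarrow> b) F" "a < b"
  shows "\<forall>\<^sub>F x in F. f x < g x"
proof -
  have "((\<lambda>x. g x - f x) \<longlongrightarrow> b - a) F" by (intro tendsto_intros assms)
  from order_tendstoD(1)[OF this, of 0] show ?thesis using assms(3) by simp
qed

definition regularly_varying :: "real \<Rightarrow> (real \<Rightarrow> real) \<Rightarrow> bool" where
  "regularly_varying \<rho> V \<longleftrightarrow>
     (\<forall>\<^sub>F x in at_top. 0 < V x) \<and> (\<forall>t>0. ((\<lambda>x. V (t * x) / V x) \<longlongrightarrow> t powr \<rho>) at_top)"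

lemma regularly_varying_eventually_pos:
  "regularly_varying \<rho> V \<Longrightarrow> filterlim f at_top F \<Longrightarrow> \<forall>\<^sub>F z in F. 0 < V (f z)"
  unfolding regularly_varying_def filterlim_iff by blast

lemma regularly_varying_scaled_ratio:
  assumes V: "regularly_varying \<rho> V" and T: "((\<lambda>x. T x / V x) \<longlongrightarrow> b) at_top"
    and f: "filterlim f at_top F" and t: "0 < t"
  shows "((\<lambda>z. T (t * f z) / V (f z)) \<longlongrightarrow> b * t powr \<rho>) F"
proof -
  have tf: "filterlim (\<lambda>z. t * f z) at_top F"
    by (rule filterlim_tendsto_pos_mult_at_top[OF tendsto_const t f])
  have "((\<lambda>x. V (t * x) / V x) \<longlongrightarrow> t powr \<rho>) at_top" using V t unfolding regularly_varying_def by blast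
  then have "((\<lambda>z. T (t * f z) / V (t * f z) * (V (t * f z) / V (f z))) \<longlongrightarrow> b * t powr \<rho>) F"
    by (intro tendsto_mult filterlim_compose[OF T tf] filterlim_compose[OF _ f])
  moreover have "\<forall>\<^sub>F z in F. T (t * f z) / V (t * f z) * (V (t * f z) / V (f z)) = T (t * f z) / V (f z)"
    using regularly_varying_eventually_pos[OF V tf] by eventually_elim simp
  ultimately show ?thesis by (rule Lim_transform_eventually)
qed

lemma regularly_varying_asymp_ratio:
  assumes V: "regularly_varying \<rho> V" and T: "((\<lambda>x. T x / V x) \<longlongrightarrow> b) at_top" and anti: "antimono T"
    and f: "filterlim f at_top F" and g: "((\<lambda>z. g z / f z) \<longlongrightarrow> L) F" and L: "0 < L"
  shows "((\<lambda>z. T (g z) / V (f z)) \<longlongrightarrow> b * L powr \<rho>) F"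
proof (rule tendsto_sandwich_approx)
  fix \<epsilon> :: real assume "0 < \<epsilon>"
  have "((\<lambda>\<delta>. b * (L + \<delta>) powr \<rho>) \<longlongrightarrow> b * (L + 0) powr \<rho>) (at_right 0)"
    "((\<lambda>\<delta>. b * (L - \<delta>) powr \<rho>) \<longlongrightarrow> b * (L - 0) powr \<rho>) (at_right 0)"
    using L by (intro tendsto_intros; simp)+
  then have "\<forall>\<^sub>F \<delta> in at_right 0. b * L powr \<rho> - \<epsilon> < b * (L + \<delta>) powr \<rho>
      \<and> b * (L - \<delta>) powr \<rho> < b * L powr \<rho> + \<epsilon> \<and> 0 < \<delta> \<and> \<delta> < L"
    using \<open>0 < \<epsilon>\<close> L
    by (intro eventually_conj order_tendstoD eventually_at_right_less) (auto intro: eventually_at_rightI)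
  then obtain \<delta> where \<delta>: "b * L powr \<rho> - \<epsilon> < b * (L + \<delta>) powr \<rho>" "b * (L - \<delta>) powr \<rho> < b * L powr \<rho> + \<epsilon>"
    "0 < \<delta>" "\<delta> < L"
    using eventually_happens'[OF trivial_limit_at_right_real] by blast
  have "\<forall>\<^sub>F z in F. L - \<delta> < g z / f z" "\<forall>\<^sub>F z in F. g z / f z < L + \<delta>"
    using \<delta>(3) by (intro order_tendstoD[OF g]; simp)+
  moreover have "\<forall>\<^sub>F z in F. 0 < f z" using f by (simp add: filterlim_at_top_dense)
  ultimately have "\<forall>\<^sub>F z in F. (L - \<delta>) * f z \<le> g z \<and> g z \<le> (L + \<delta>) * f z"
    by eventually_elim (auto simp: field_simps)
  then have "\<forall>\<^sub>F z in F. T ((L + \<delta>) * f z) / V (f z) \<le> T (g z) / V (f z)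
      \<and> T (g z) / V (f z) \<le> T ((L - \<delta>) * f z) / V (f z)"
    using regularly_varying_eventually_pos[OF V f]
    by eventually_elim (auto intro!: divide_right_mono antimonoD[OF anti])
  moreover have "((\<lambda>z. T ((L + \<delta>) * f z) / V (f z)) \<longlongrightarrow> b * (L + \<delta>) powr \<rho>) F"
    "((\<lambda>z. T ((L - \<delta>) * f z) / V (f z)) \<longlongrightarrow> b * (L - \<delta>) powr \<rho>) F"
    using \<delta>(3,4) L by (intro regularly_varying_scaled_ratio[OF V T f]; simp)+
  ultimately show "\<exists>lo up fl fu. b * L powr \<rho> - \<epsilon> \<le> lo \<and> up \<le> b * L powr \<rho> + \<epsilon> \<and> (fl \<longlongrightarrow> lo) F
      \<and> (fu \<longlongrightarrow> up) F \<and> (\<forall>\<^sub>F z in F. fl z \<le> T (g z) / V (f z) \<and> T (g z) / V (f z) \<le> fu z)"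
    using \<delta>(1,2) by (intro exI conjI) (auto simp del: minus_diff_eq)
qed

lemma eventually_at_right_0_unit_interval: "\<forall>\<^sub>F \<alpha> in at_right 0. 0 < \<alpha> \<and> \<alpha> < (1::real)"
  by (auto simp: eventually_at_right_field intro!: exI[of _ 1])

lemma tail_ratio_limit_nonneg:
  assumes "regularly_varying \<rho> V" "((\<lambda>x. tail M Z x / V x) \<longlongrightarrow> b) at_top"
  shows "0 \<le> b"
proof (rule tendsto_lowerbound[OF assms(2)])
  show "\<forall>\<^sub>F x in at_top. 0 \<le> tail M Z x / V x"
    using regularly_varying_eventually_pos[OF assms(1) filterlim_ident]
    by eventually_elim (simp add: tail_nonneg)
qed simp

lemma tail_pos_of_ratio_limit:
  assumes "finite_measure M" "Z \<in> borel_measurable M"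
    and "((\<lambda>x. tail M Z x / V x) \<longlongrightarrow> b) at_top" "0 < b"
  shows "0 < tail M Z x"
proof -
  have "\<forall>\<^sub>F y in at_top. 0 < tail M Z y / V y" using assms(3,4) by (rule order_tendstoD)
  then obtain y where "x \<le> y" "0 < tail M Z y / V y"
    unfolding eventually_at_top_linorder by (meson nle_le)
  then have "0 < tail M Z y" using tail_nonneg[of M Z y] by (cases "tail M Z y = 0") auto
  also have "\<dots> \<le> tail M Z x" using antimonoD[OF tail_antimono[OF assms(1,2)] \<open>x \<le> y\<close>] .
  finally show ?thesis .
qed

context
  fixes M :: "'a measure" and Y :: "'a \<Rightarrow> real"
  assumes P: "prob_space M" and Y: "Y \<in> borel_measurable M" and nonneg: "\<forall>\<omega>\<in>space M. 0 \<le> Y \<omega>"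
begin

lemma VaR_le_of_tail_less: "0 < \<alpha> \<Longrightarrow> \<alpha> < 1 \<Longrightarrow> tail M Y x < \<alpha> \<Longrightarrow> VaR M \<alpha> Y \<le> x"
  using less_VaR_imp_tail_gt[OF P Y nonneg, of \<alpha> x] by (meson linorder_not_le order.asym)

lemma less_VaR_of_tail_gt: "0 < \<alpha> \<Longrightarrow> \<alpha> < 1 \<Longrightarrow> \<alpha> < tail M Y x \<Longrightarrow> x < VaR M \<alpha> Y"
  using antimonoD[OF tail_antimono[OF prob_space.finite_measure[OF P] Y], of "VaR M \<alpha> Y" x]
    tail_VaR_le[OF P Y nonneg, of \<alpha>] by force

lemma VaR_tendsto_at_top:
  assumes pos: "\<And>x. 0 < tail M Y x"
  shows "filterlim (\<lambda>\<alpha>. VaR M \<alpha> Y) at_top (at_right 0)"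
  unfolding filterlim_at_top
proof
  fix z :: real
  have "\<forall>\<^sub>F \<alpha> in at_right 0. \<alpha> < tail M Y z"
    by (rule order_tendstoD(2)[OF tendsto_ident_at pos])
  with eventually_at_right_0_unit_interval show "\<forall>\<^sub>F \<alpha> in at_right 0. z \<le> VaR M \<alpha> Y"
    by eventually_elim (auto dest: less_VaR_of_tail_gt)
qed

text \<open>Since \<open>tail (VaR \<alpha>) \<le> \<alpha> < tail (t * VaR \<alpha>)\<close> for \<open>t < 1\<close>, the level \<open>\<alpha>\<close> is asymptotically
  the tail at the Value-at-Risk.\<close>
lemma VaR_tail_asymp:
  assumes V: "regularly_varying \<rho> V" and T: "((\<lambda>x. tail M Y x / V x) \<longlongrightarrow> b) at_top" and b: "0 < b"
  shows "((\<lambda>\<alpha>. \<alpha> / V (VaR M \<alpha> Y)) \<longlongrightarrow> b) (at_right 0)"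
proof (rule tendsto_sandwich_approx)
  fix \<epsilon> :: real assume "0 < \<epsilon>"
  define q where "q \<alpha> = VaR M \<alpha> Y" for \<alpha>
  have q: "filterlim q at_top (at_right 0)" unfolding q_def
    using tail_pos_of_ratio_limit[OF prob_space.finite_measure[OF P] Y T b] by (rule VaR_tendsto_at_top)
  have "((\<lambda>t. b * t powr \<rho>) \<longlongrightarrow> b * 1 powr \<rho>) (at_left 1)" by (intro tendsto_intros) simp
  then have "\<forall>\<^sub>F t in at_left 1. b * t powr \<rho> < b + \<epsilon>" using \<open>0 < \<epsilon>\<close> by (simp add: order_tendstoD(2))
  moreover have "\<forall>\<^sub>F t in at_left 1. 0 < t \<and> t < (1::real)"
    by (auto simp: eventually_at_left_field intro!: exI[of _ 0])
  ultimately have "\<forall>\<^sub>F t in at_left 1. b * t powr \<rho> < b + \<epsilon> \<and> 0 < t \<and> t < 1"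
    by eventually_elim blast
  then obtain t where t: "b * t powr \<rho> < b + \<epsilon>" "0 < t" "t < 1"
    using eventually_happens'[OF trivial_limit_at_left_real] by blast
  have "\<forall>\<^sub>F \<alpha> in at_right 0. tail M Y (q \<alpha>) / V (q \<alpha>) \<le> \<alpha> / V (q \<alpha>)
      \<and> \<alpha> / V (q \<alpha>) \<le> tail M Y (t * q \<alpha>) / V (q \<alpha>)"
    using eventually_at_right_0_unit_interval regularly_varying_eventually_pos[OF V q]
      filterlim_at_top_dense[THEN iffD1, OF q, rule_format, of 0]
  proof eventually_elim
    case (elim \<alpha>)
    have "tail M Y (q \<alpha>) \<le> \<alpha>" unfolding q_def using tail_VaR_le[OF P Y nonneg] elim by blast
    moreover have "\<alpha> < tail M Y (t * q \<alpha>)"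
      unfolding q_def using less_VaR_imp_tail_gt[OF P Y nonneg] elim t by (simp add: q_def)
    ultimately show ?case using elim by (auto intro!: divide_right_mono)
  qed
  moreover have "((\<lambda>\<alpha>. tail M Y (q \<alpha>) / V (q \<alpha>)) \<longlongrightarrow> b) (at_right 0)" by (rule filterlim_compose[OF T q])
  moreover have "((\<lambda>\<alpha>. tail M Y (t * q \<alpha>) / V (q \<alpha>)) \<longlongrightarrow> b * t powr \<rho>) (at_right 0)"
    by (rule regularly_varying_scaled_ratio[OF V T q t(2)])
  ultimately show "\<exists>lo up fl fu. b - \<epsilon> \<le> lo \<and> up \<le> b + \<epsilon> \<and> (fl \<longlongrightarrow> lo) (at_right 0)
      \<and> (fu \<longlongrightarrow> up) (at_right 0) \<and> (\<forall>\<^sub>F \<alpha> in at_right 0. fl \<alpha> \<le> \<alpha> / V (VaR M \<alpha> Y) \<and> \<alpha> / V (VaR M \<alpha> Y) \<le> fu \<alpha>)"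
    using t(1) \<open>0 < \<epsilon>\<close> unfolding q_def by (intro exI conjI) auto
qed

lemma VaR_ratio_tendsto:
  assumes V: "regularly_varying (-\<gamma>) V" and "0 < \<gamma>" and T: "((\<lambda>x. tail M Y x / V x) \<longlongrightarrow> b) at_top"
    and s: "filterlim s at_top (at_right 0)" and s_level: "((\<lambda>\<alpha>. \<alpha> / V (s \<alpha>)) \<longlongrightarrow> c) (at_right 0)"
    and "0 < c"
  shows "((\<lambda>\<alpha>. VaR M \<alpha> Y / s \<alpha>) \<longlongrightarrow> (b / c) powr (1 / \<gamma>)) (at_right 0)"
proof -
  define \<kappa> where "\<kappa> = (b / c) powr (1 / \<gamma>)"
  have "0 \<le> b" by (rule tail_ratio_limit_nonneg[OF V T])
  then have \<kappa>_pow: "\<kappa> powr \<gamma> = b / c" unfolding \<kappa>_def using \<open>0 < c\<close> \<open>0 < \<gamma>\<close> by (simp add: powr_powr)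
  have "0 \<le> \<kappa>" unfolding \<kappa>_def by simp
  have scaled: "((\<lambda>\<alpha>. tail M Y (l * s \<alpha>) / V (s \<alpha>)) \<longlongrightarrow> b * l powr (-\<gamma>)) (at_right 0)" if "0 < l" for l
    by (rule regularly_varying_scaled_ratio[OF V T s that])
  have ev: "\<forall>\<^sub>F \<alpha> in at_right 0. (0 < \<alpha> \<and> \<alpha> < 1) \<and> 0 < V (s \<alpha>) \<and> 0 < s \<alpha>"
    using eventually_at_right_0_unit_interval regularly_varying_eventually_pos[OF V s]
      filterlim_at_top_dense[THEN iffD1, OF s, rule_format, of 0] by eventually_elim blast
  show ?thesis unfolding \<kappa>_def[symmetric]
  proof (rule order_tendstoI)
    fix y assume "\<kappa> < y"
    define l where "l = (\<kappa> + y) / 2"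
    have l: "\<kappa> < l" "l < y" "0 < l" using \<open>\<kappa> < y\<close> \<open>0 \<le> \<kappa>\<close> unfolding l_def by auto
    have "b / c < l powr \<gamma>" using powr_less_mono2[OF \<open>0 < \<gamma>\<close> \<open>0 \<le> \<kappa>\<close> l(1)] \<kappa>_pow by simp
    then have "b * l powr (-\<gamma>) < c" using \<open>0 < c\<close> l(3) by (simp add: powr_minus_divide field_simps)
    from eventually_less_of_tendsto[OF scaled[OF l(3)] s_level this] ev
    show "\<forall>\<^sub>F \<alpha> in at_right 0. VaR M \<alpha> Y / s \<alpha> < y"
    proof eventually_elim
      case (elim \<alpha>)
      then have "tail M Y (l * s \<alpha>) < \<alpha>" by (simp add: divide_strict_right_mono_neg field_simps)
      then have "VaR M \<alpha> Y \<le> l * s \<alpha>" using elim by (intro VaR_le_of_tail_less) auto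
      also have "\<dots> < y * s \<alpha>" using elim l(2) by simp
      finally show ?case using elim by (simp add: divide_less_eq)
    qed
  next
    fix y assume "y < \<kappa>"
    show "\<forall>\<^sub>F \<alpha> in at_right 0. y < VaR M \<alpha> Y / s \<alpha>"
    proof (cases "y < 0")
      case True
      from ev show ?thesis
        by eventually_elim (use True VaR_nonneg[OF P Y nonneg] in \<open>auto intro: less_le_trans\<close>)
    next
      case False
      define l where "l = (y + \<kappa>) / 2"
      have l: "y < l" "l < \<kappa>" "0 < l" using \<open>y < \<kappa>\<close> False unfolding l_def by auto
      have "l powr \<gamma> < b / c" using powr_less_mono2[OF \<open>0 < \<gamma>\<close> _ l(2)] l(3) \<kappa>_pow by simp
      then have "c < b * l powr (-\<gamma>)" using \<open>0 < c\<close> l(3) by (simp add: powr_minus_divide field_simps)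
      from eventually_less_of_tendsto[OF s_level scaled[OF l(3)] this] ev
      show ?thesis
      proof eventually_elim
        case (elim \<alpha>)
        then have "\<alpha> < tail M Y (l * s \<alpha>)" by (simp add: divide_strict_right_mono_neg field_simps)
        then have "l * s \<alpha> < VaR M \<alpha> Y" using elim by (intro less_VaR_of_tail_gt) auto
        moreover have "y * s \<alpha> < l * s \<alpha>" by (rule mult_strict_right_mono[OF l(1)]) (use elim in simp)
        ultimately have "y * s \<alpha> < VaR M \<alpha> Y" by linarith
        with elim show ?case by (simp add: less_divide_eq)
      qed
    qed
  qed
qed

end

lemma powr_sum_factor:
  fixes b :: "'i \<Rightarrow> real"
  assumes "0 < \<gamma>" "0 < b k" "\<And>i. i \<in> I \<Longrightarrow> 0 \<le> b i"
  shows "(\<Sum>i\<in>I. b i powr (1 / \<gamma>)) powr \<gamma> = b k * (\<Sum>i\<in>I. (b i / b k) powr (1 / \<gamma>)) powr \<gamma>"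
proof -
  have "b i powr (1 / \<gamma>) = b k powr (1 / \<gamma>) * (b i / b k) powr (1 / \<gamma>)" if "i \<in> I" for i
    using assms(2) assms(3)[OF that] by (simp add: powr_mult[symmetric])
  then have "(\<Sum>i\<in>I. b i powr (1 / \<gamma>)) = b k powr (1 / \<gamma>) * (\<Sum>i\<in>I. (b i / b k) powr (1 / \<gamma>))"
    by (simp add: sum_distrib_left)
  then show ?thesis using assms(1,2) by (simp add: powr_mult powr_powr sum_nonneg)
qed

lemma tendsto_ratio_add_const:
  fixes x r :: "'b \<Rightarrow> real"
  assumes r: "filterlim r at_top F" and x: "((\<lambda>z. x z / r z) \<longlongrightarrow> L) F"
  shows "((\<lambda>z. (x z + a) / r z) \<longlongrightarrow> L) F"
proof -
  have "((\<lambda>z. x z / r z + a * inverse (r z)) \<longlongrightarrow> L + a * 0) F"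
    by (intro tendsto_intros x tendsto_inverse_0_at_top r)
  moreover have "\<forall>\<^sub>F z in F. x z / r z + a * inverse (r z) = (x z + a) / r z"
    using filterlim_at_top_dense[THEN iffD1, OF r, rule_format, of 0]
    by eventually_elim (simp add: field_simps)
  ultimately show ?thesis by (simp add: Lim_transform_eventually)
qed

lemma regularly_varying_ratio_over_level:
  assumes V: "regularly_varying \<rho> V" and T: "((\<lambda>x. T x / V x) \<longlongrightarrow> b) at_top" and "antimono T"
    and r: "filterlim r at_top F" and level: "((\<lambda>z. h z / V (r z)) \<longlongrightarrow> c) F" and "c \<noteq> 0"
    and x: "((\<lambda>z. x z / r z) \<longlongrightarrow> L) F" and "0 < L"
  shows "((\<lambda>z. T (x z) / h z) \<longlongrightarrow> b * L powr \<rho> / c) F"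
proof -
  have "((\<lambda>z. (T (x z) / V (r z)) / (h z / V (r z))) \<longlongrightarrow> b * L powr \<rho> / c) F"
    using \<open>c \<noteq> 0\<close> by (intro tendsto_divide level regularly_varying_asymp_ratio[OF V T] assms)
  moreover have "\<forall>\<^sub>F z in F. (T (x z) / V (r z)) / (h z / V (r z)) = T (x z) / h z"
    using regularly_varying_eventually_pos[OF V r] by eventually_elim simp
  ultimately show ?thesis by (rule Lim_transform_eventually)
qed

lemma DQ_VaR_between_tails:
  fixes Y :: "'a \<Rightarrow> real ^ 'n"
  assumes P: "prob_space M" and Y: "Y \<in> borel_measurable M" and nonneg: "\<forall>\<omega>\<in>space M. \<forall>i. 0 \<le> Y \<omega> $ i"
    and "0 < \<alpha>"
  defines "S \<equiv> \<lambda>\<omega>. \<Sum>i\<in>UNIV. Y \<omega> $ i" and "c \<equiv> \<Sum>i\<in>UNIV. VaR M \<alpha> (\<lambda>\<omega>. Y \<omega> $ i)"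
  shows "tail M S (c + 1) / \<alpha> \<le> DQ_VaR M \<alpha> Y" and "DQ_VaR M \<alpha> Y \<le> tail M S c / \<alpha>"
proof -
  have S: "S \<in> borel_measurable M" unfolding S_def
    by (intro borel_measurable_sum measurable_compose[OF Y borel_measurable_nth])
  have S_nonneg: "\<forall>\<omega>\<in>space M. 0 \<le> S \<omega>" unfolding S_def using nonneg by (simp add: sum_nonneg)
  have DQ: "DQ_VaR M \<alpha> Y = alpha_star M c S / \<alpha>" unfolding DQ_VaR_eq_alpha_star c_def S_def ..
  show "tail M S (c + 1) / \<alpha> \<le> DQ_VaR M \<alpha> Y" "DQ_VaR M \<alpha> Y \<le> tail M S c / \<alpha>"
    unfolding DQ using \<open>0 < \<alpha>\<close>
    by (intro divide_right_mono alpha_star_le_tail[OF P S S_nonneg] tail_le_alpha_star[OF P S S_nonneg];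
        simp)+
qed

theorem DQ_VaR_tendsto_of_tail_ratios:
  fixes Y :: "'a \<Rightarrow> real ^ 'n" and b :: "'n \<Rightarrow> real"
  assumes P: "prob_space M" and Y: "Y \<in> borel_measurable M" and nonneg: "\<forall>\<omega>\<in>space M. \<forall>i. 0 \<le> Y \<omega> $ i"
    and "0 < \<gamma>" and V: "regularly_varying (-\<gamma>) V"
    and T: "\<And>i. ((\<lambda>x. tail M (\<lambda>\<omega>. Y \<omega> $ i) x / V x) \<longlongrightarrow> b i) at_top"
    and T_sum: "((\<lambda>x. tail M (\<lambda>\<omega>. \<Sum>i\<in>UNIV. Y \<omega> $ i) x / V x) \<longlongrightarrow> b_sum) at_top"
    and "0 < b k"
  shows "((\<lambda>\<alpha>. DQ_VaR M \<alpha> Y) \<longlongrightarrow> b_sum / (\<Sum>i\<in>UNIV. b i powr (1 / \<gamma>)) powr \<gamma>) (at_right 0)"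
proof -
  define S where "S \<omega> = (\<Sum>i\<in>UNIV. Y \<omega> $ i)" for \<omega>
  define q where "q i \<alpha> = VaR M \<alpha> (\<lambda>\<omega>. Y \<omega> $ i)" for i \<alpha>
  define c where "c \<alpha> = (\<Sum>i\<in>UNIV. q i \<alpha>)" for \<alpha>
  define \<theta> where "\<theta> = (\<Sum>i\<in>UNIV. (b i / b k) powr (1 / \<gamma>))"
  have Y_i: "(\<lambda>\<omega>. Y \<omega> $ i) \<in> borel_measurable M" for i
    by (rule measurable_compose[OF Y borel_measurable_nth])
  have Y_i_nonneg: "\<forall>\<omega>\<in>space M. 0 \<le> Y \<omega> $ i" for i using nonneg by blast
  have S_antimono: "antimono (tail M S)" unfolding S_def
    using P by (intro tail_antimono prob_space.finite_measure borel_measurable_sum Y_i)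
  have q_k: "filterlim (q k) at_top (at_right 0)" unfolding q_def
    using tail_pos_of_ratio_limit[OF prob_space.finite_measure[OF P] Y_i T \<open>0 < b k\<close>]
    by (rule VaR_tendsto_at_top[OF P Y_i Y_i_nonneg])
  have level: "((\<lambda>\<alpha>. \<alpha> / V (q k \<alpha>)) \<longlongrightarrow> b k) (at_right 0)" unfolding q_def
    by (rule VaR_tail_asymp[OF P Y_i Y_i_nonneg V T \<open>0 < b k\<close>])
  have "((\<lambda>\<alpha>. \<Sum>i\<in>UNIV. q i \<alpha> / q k \<alpha>) \<longlongrightarrow> \<theta>) (at_right 0)" unfolding \<theta>_def
    by (intro tendsto_sum, unfold q_def,
        rule VaR_ratio_tendsto[OF P Y_i Y_i_nonneg V \<open>0 < \<gamma>\<close> T q_k[unfolded q_def] level[unfolded q_def]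
          \<open>0 < b k\<close>])
  then have c_ratio: "((\<lambda>\<alpha>. c \<alpha> / q k \<alpha>) \<longlongrightarrow> \<theta>) (at_right 0)" unfolding c_def by (simp add: sum_divide_distrib)
  have "1 \<le> \<theta>"
    unfolding \<theta>_def using member_le_sum[of k UNIV "\<lambda>i. (b i / b k) powr (1 / \<gamma>)"] \<open>0 < b k\<close> by simp
  have tail_over_level: "((\<lambda>\<alpha>. tail M S (x \<alpha>) / \<alpha>) \<longlongrightarrow> b_sum * \<theta> powr (-\<gamma>) / b k) (at_right 0)"
    if "((\<lambda>\<alpha>. x \<alpha> / q k \<alpha>) \<longlongrightarrow> \<theta>) (at_right 0)" for x
    using T_sum[folded S_def] \<open>0 < b k\<close> \<open>1 \<le> \<theta>\<close>
    by (intro regularly_varying_ratio_over_level[OF V _ S_antimono q_k level _ that]) auto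
  have "\<forall>\<^sub>F \<alpha> in at_right 0. tail M S (c \<alpha> + 1) / \<alpha> \<le> DQ_VaR M \<alpha> Y \<and> DQ_VaR M \<alpha> Y \<le> tail M S (c \<alpha>) / \<alpha>"
    using eventually_at_right_less
    by eventually_elim (use DQ_VaR_between_tails[OF P Y nonneg] in \<open>simp add: S_def[abs_def] c_def q_def\<close>)
  then have "((\<lambda>\<alpha>. DQ_VaR M \<alpha> Y) \<longlongrightarrow> b_sum * \<theta> powr (-\<gamma>) / b k) (at_right 0)"
    by (intro tendsto_sandwich[OF _ _ tail_over_level[OF tendsto_ratio_add_const[OF q_k c_ratio]]
        tail_over_level[OF c_ratio]]) (auto elim: eventually_mono)
  moreover have "b_sum * \<theta> powr (-\<gamma>) / b k = b_sum / (\<Sum>i\<in>UNIV. b i powr (1 / \<gamma>)) powr \<gamma>"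
    using powr_sum_factor[of \<gamma> b k UNIV] \<open>0 < \<gamma>\<close> \<open>0 < b k\<close> tail_ratio_limit_nonneg[OF V T] \<open>1 \<le> \<theta>\<close>
    unfolding \<theta>_def by (simp add: powr_minus_divide)
  ultimately show ?thesis by simp
qed

section \<open>Step functions on the simplex\<close>

lemma closed_unit_simplex: "closed (unit_simplex :: (real ^ 'n) set)"
proof -
  have "unit_simplex = (\<Inter>i. {x :: real ^ 'n. 0 \<le> x $ i}) \<inter> {x. (\<Sum>i\<in>UNIV. x $ i) = 1}"
    unfolding unit_simplex_def by auto
  moreover have "closed ((\<Inter>i. {x :: real ^ 'n. 0 \<le> x $ i}) \<inter> {x. (\<Sum>i\<in>UNIV. x $ i) = 1})"
    by (intro closed_Int closed_INT ballI closed_Collect_le closed_Collect_eq continuous_intros)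
  ultimately show ?thesis by simp
qed

lemma frontier_of_level_band:
  fixes g :: "'b::topological_space \<Rightarrow> real"
  assumes "continuous_on T g"
  shows "(top_of_set T) frontier_of {\<theta>\<in>T. a < g \<theta> \<and> g \<theta> \<le> b} \<subseteq> {\<theta>\<in>T. g \<theta> = a \<or> g \<theta> = b}"
proof -
  have "closedin (top_of_set T) (T \<inter> g -` {a..b})"
    by (rule continuous_closedin_preimage[OF assms]) auto
  then have "(top_of_set T) closure_of {\<theta>\<in>T. a < g \<theta> \<and> g \<theta> \<le> b} \<subseteq> T \<inter> g -` {a..b}"
    by (rule closure_of_minimal[rotated]) auto
  moreover have "openin (top_of_set T) (T \<inter> g -` {a<..<b})"
    by (rule continuous_openin_preimage_gen[OF assms]) auto
  then have "T \<inter> g -` {a<..<b} \<subseteq> (top_of_set T) interior_of {\<theta>\<in>T. a < g \<theta> \<and> g \<theta> \<le> b}"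
    by (rule interior_of_maximal[rotated]) auto
  ultimately show ?thesis unfolding frontier_of_def by force
qed

text \<open>A finite measure charges at most countably many level sets of \<open>g\<close>.\<close>
lemma (in finite_measure) exists_null_level:
  fixes g :: "'a \<Rightarrow> real"
  assumes g: "g \<in> borel_measurable M" and "u < v"
  shows "\<exists>c\<in>{u<..<v}. measure M {x\<in>space M. g x = c} = 0"
proof -
  interpret D: finite_measure "distr M borel g" by (rule finite_measure_distr[OF g])
  have "uncountable {u<..<v}" using \<open>u < v\<close> by (simp add: uncountable_open_interval)
  then obtain c where c: "c \<in> {u<..<v}" "c \<notin> {x. measure (distr M borel g) {x} \<noteq> 0}"
    using countable_subset[OF _ D.countable_support] by blast
  have "measure (distr M borel g) {c} = measure M {x\<in>space M. g x = c}"
    using g by (subst measure_distr) (auto intro!: arg_cong[where f="measure M"])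
  then show ?thesis using c by auto
qed

text \<open>Each level \<open>a k\<close> is chosen between \<open>(k * \<epsilon> / 2) powr (1 / \<gamma>)\<close> and
  \<open>((k + 1) * \<epsilon> / 2) powr (1 / \<gamma>)\<close>.\<close>
lemma (in finite_measure) exists_null_level_grid:
  fixes g :: "'a \<Rightarrow> real"
  assumes g: "g \<in> borel_measurable M" and "0 < \<gamma>" "0 < \<epsilon>"
  shows "\<exists>a m. strict_mono a \<and> 0 < a 0 \<and> 1 < a m \<and> a 0 powr \<gamma> \<le> \<epsilon>
     \<and> (\<forall>k. a (Suc k) powr \<gamma> - a k powr \<gamma> \<le> \<epsilon>) \<and> (\<forall>k. measure M {x\<in>space M. g x = a k} = 0)"
proof -
  define h where "h = \<epsilon> / 2"
  have "0 < h" using \<open>0 < \<epsilon>\<close> unfolding h_def by simp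
  have "\<exists>c. (k * h) powr (1 / \<gamma>) < c \<and> c < ((k + 1) * h) powr (1 / \<gamma>) \<and> measure M {x\<in>space M. g x = c} = 0"
    for k :: nat
  proof -
    have "(k * h) powr (1 / \<gamma>) < ((k + 1) * h) powr (1 / \<gamma>)"
      using \<open>0 < h\<close> \<open>0 < \<gamma>\<close> by (intro powr_less_mono2) auto
    from exists_null_level[OF g this] show ?thesis by auto
  qed
  then have "\<exists>a :: nat \<Rightarrow> real. \<forall>k::nat. (k * h) powr (1 / \<gamma>) < a k \<and> a k < ((k + 1) * h) powr (1 / \<gamma>)
      \<and> measure M {x\<in>space M. g x = a k} = 0"
    by (intro choice allI)
  then obtain a :: "nat \<Rightarrow> real" where
    a: "\<And>k::nat. (k * h) powr (1 / \<gamma>) < a k" "\<And>k::nat. a k < ((k + 1) * h) powr (1 / \<gamma>)"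
    "\<And>k. measure M {x\<in>space M. g x = a k} = 0"
    by blast
  have a_pos: "0 < a k" for k using a(1)[of k] by (smt (verit) powr_ge_zero)
  have lower: "k * h < a k powr \<gamma>" for k :: nat
    using powr_less_mono2[OF \<open>0 < \<gamma>\<close> _ a(1)[of k]] \<open>0 < h\<close> \<open>0 < \<gamma>\<close> by (simp add: powr_powr)
  have upper: "a k powr \<gamma> < (k + 1) * h" for k :: nat
    using powr_less_mono2[OF \<open>0 < \<gamma>\<close> _ a(2)[of k]] a_pos[of k] \<open>0 < h\<close> \<open>0 < \<gamma>\<close> by (simp add: powr_powr)
  have "strict_mono a" unfolding strict_mono_Suc_iff
  proof
    fix k
    have "a k powr \<gamma> < a (Suc k) powr \<gamma>" using upper[of k] lower[of "Suc k"] by simp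
    then show "a k < a (Suc k)" using powr_less_cancel2[OF \<open>0 < \<gamma>\<close> a_pos a_pos] by blast
  qed
  define m where "m = nat \<lceil>1 / h\<rceil>"
  have "1 / h \<le> m" unfolding m_def by (rule real_nat_ceiling_ge)
  then have "1 powr \<gamma> < a m powr \<gamma>" using lower[of m] \<open>0 < h\<close> by (simp add: divide_le_eq)
  then have "1 < a m" using powr_less_cancel2[OF \<open>0 < \<gamma>\<close> _ a_pos] by simp
  have "a 0 powr \<gamma> < h" using upper[of 0] by simp
  then have "a 0 powr \<gamma> \<le> \<epsilon>" using \<open>0 < h\<close> unfolding h_def by linarith
  moreover have "a (Suc k) powr \<gamma> - a k powr \<gamma> \<le> \<epsilon>" for k
    using upper[of "Suc k"] lower[of k] unfolding h_def by (simp add: field_simps)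
  ultimately show ?thesis using \<open>strict_mono a\<close> \<open>1 < a m\<close> a_pos a(3) by blast
qed

lemma sum_indicator_disjoint:
  fixes c :: "'i \<Rightarrow> real"
  assumes "finite K" "disjoint_family_on B K" "j \<in> K" "x \<in> B j"
  shows "(\<Sum>k\<in>K. c k * indicator (B k) x) = c j"
proof -
  have "(\<Sum>k\<in>K. c k * indicator (B k) x) = (\<Sum>k\<in>K. if k = j then c k else 0)"
    using assms by (intro sum.cong) (auto simp: disjoint_family_on_def indicator_def)
  then show ?thesis using assms(1,3) by simp
qed

lemma (in finite_measure) integral_step_function:
  fixes c :: "'i \<Rightarrow> real"
  assumes "\<And>k. k \<in> K \<Longrightarrow> B k \<in> sets M"
  shows "integrable M (\<lambda>x. \<Sum>k\<in>K. c k * indicator (B k) x)"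
    and "(\<integral>x. (\<Sum>k\<in>K. c k * indicator (B k) x) \<partial>M) = (\<Sum>k\<in>K. c k * measure M (B k))"
proof -
  have int: "integrable M (\<lambda>x. c k * indicator (B k) x :: real)" if "k \<in> K" for k
    using assms[OF that] by (intro integrable_mult_right) (simp add: emeasure_finite less_top[symmetric])
  then show "integrable M (\<lambda>x. \<Sum>k\<in>K. c k * indicator (B k) x)" by (rule Bochner_Integration.integrable_sum)
  show "(\<integral>x. (\<Sum>k\<in>K. c k * indicator (B k) x) \<partial>M) = (\<Sum>k\<in>K. c k * measure M (B k))"
    using int assms by (simp add: Bochner_Integration.integral_sum Int_absorb2 sets.sets_into_space)
qed

lemma le_first_or_crossing_step:
  fixes a :: "nat \<Rightarrow> real"
  assumes "y \<le> a m"
  shows "y \<le> a 0 \<or> (\<exists>k<m. a k < y \<and> y \<le> a (Suc k))"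
  using assms
proof (induction m)
  case (Suc m)
  then show ?case by (cases "y \<le> a m") (auto intro: less_SucI)
qed simp

text \<open>Squeezing \<open>f\<close> between the step functions \<open>\<Sum>k. l k * indicator (B k)\<close> and
  \<open>c + (\<Sum>k. u k * indicator (B k))\<close>, which differ by at most \<open>2 * \<epsilon>\<close>.\<close>
lemma (in prob_space) integral_band_sums_approx:
  fixes f :: "'a \<Rightarrow> real" and B :: "nat \<Rightarrow> 'a set"
  assumes f: "integrable M f" and B: "disjoint_family_on B {..<m}" "\<And>k. k < m \<Longrightarrow> B k \<in> sets M"
    and in_band: "\<And>k x. k < m \<Longrightarrow> x \<in> B k \<Longrightarrow> l k \<le> f x \<and> f x \<le> u k \<and> u k \<le> l k + \<epsilon>"
    and off_band: "\<And>x. x \<in> space M \<Longrightarrow> \<forall>k<m. x \<notin> B k \<Longrightarrow> 0 \<le> f x \<and> f x \<le> c"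
    and "0 \<le> c" "c \<le> \<epsilon>"
  shows "(\<integral>x. f x \<partial>M) - 2 * \<epsilon> \<le> (\<Sum>k<m. l k * measure M (B k))"
    and "c + (\<Sum>k<m. u k * measure M (B k)) \<le> (\<integral>x. f x \<partial>M) + 2 * \<epsilon>"
proof -
  define L where "L x = (\<Sum>k<m. l k * indicator (B k) x)" for x
  define U where "U x = c + (\<Sum>k<m. u k * indicator (B k) x)" for x
  have step: "L x \<le> f x \<and> f x \<le> U x \<and> U x \<le> L x + 2 * \<epsilon>" if "x \<in> space M" for x
  proof (cases "\<exists>k<m. x \<in> B k")
    case True
    then obtain j where "j < m" "x \<in> B j" by blast
    have "L x = l j" "U x = c + u j"
      unfolding L_def U_def using \<open>j < m\<close> \<open>x \<in> B j\<close> B(1)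
      by (simp_all only: sum_indicator_disjoint[OF finite_lessThan] lessThan_iff)
    then show ?thesis using in_band[OF \<open>j < m\<close> \<open>x \<in> B j\<close>] \<open>0 \<le> c\<close> \<open>c \<le> \<epsilon>\<close> by simp
  next
    case False
    then show ?thesis using off_band[OF that] \<open>c \<le> \<epsilon>\<close> unfolding L_def U_def by (simp add: indicator_def)
  qed
  have L: "integrable M L" "integral\<^sup>L M L = (\<Sum>k<m. l k * measure M (B k))"
    unfolding L_def using B(2) by (blast intro: integral_step_function)+
  have step_u: "integrable M (\<lambda>x. \<Sum>k<m. u k * indicator (B k) x)"
    "(\<integral>x. (\<Sum>k<m. u k * indicator (B k) x) \<partial>M) = (\<Sum>k<m. u k * measure M (B k))"
    using B(2) by (blast intro: integral_step_function)+
  have U: "integrable M U" "integral\<^sup>L M U = c + (\<Sum>k<m. u k * measure M (B k))"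
    unfolding U_def using step_u by (simp_all add: Bochner_Integration.integral_add prob_space)
  have "(\<integral>x. f x \<partial>M) \<le> integral\<^sup>L M U" using step by (intro integral_mono f U(1)) auto
  also have "\<dots> \<le> (\<integral>x. L x + 2 * \<epsilon> \<partial>M)" using step by (intro integral_mono U(1)) (auto intro: L(1))
  also have "\<dots> = integral\<^sup>L M L + 2 * \<epsilon>" using L(1) by (simp add: prob_space)
  finally show "(\<integral>x. f x \<partial>M) - 2 * \<epsilon> \<le> (\<Sum>k<m. l k * measure M (B k))" using L(2) by simp
  have "integral\<^sup>L M U \<le> (\<integral>x. L x + 2 * \<epsilon> \<partial>M)" using step by (intro integral_mono U(1)) (auto intro: L(1))
  also have "\<dots> = integral\<^sup>L M L + 2 * \<epsilon>" using L(1) by (simp add: prob_space)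
  also have "integral\<^sup>L M L \<le> (\<integral>x. f x \<partial>M)" using step by (intro integral_mono f L(1)) auto
  finally show "c + (\<Sum>k<m. u k * measure M (B k)) \<le> (\<integral>x. f x \<partial>M) + 2 * \<epsilon>" using U(2) by simp
qed

section \<open>Multivariate regular variation\<close>

lemma L1norm_nonneg: "0 \<le> L1norm x"
  unfolding L1norm_def by (simp add: sum_nonneg)

lemma L1norm_borel[measurable]: "L1norm \<in> borel_measurable borel"
  unfolding L1norm_def[abs_def] by (intro borel_measurable_continuous_onI continuous_intros)

lemma L1norm_eq_0_iff: "L1norm x = 0 \<longleftrightarrow> x = 0"
  unfolding L1norm_def by (simp add: sum_nonneg_eq_0_iff vec_eq_iff)

lemma L1norm_scaled_in_unit_simplex:
  assumes "\<forall>i. 0 \<le> x $ i" "x \<noteq> 0"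
  shows "x /\<^sub>R L1norm x \<in> unit_simplex"
proof -
  have "L1norm x = (\<Sum>i\<in>UNIV. x $ i)" "0 < L1norm x"
    using assms L1norm_nonneg[of x] L1norm_eq_0_iff[of x] unfolding L1norm_def by auto
  then show ?thesis unfolding unit_simplex_def using assms(1)
    by (auto simp: divide_simps sum_divide_distrib[symmetric])
qed

lemma L1norm_mult_inner_scaled: "L1norm x * (v \<bullet> (x /\<^sub>R L1norm x)) = v \<bullet> x"
  by (cases "x = 0") (simp_all add: L1norm_eq_0_iff)

lemma inner_unit_simplex_bounds:
  assumes "\<forall>i. 0 \<le> v $ i \<and> v $ i \<le> 1" "s \<in> unit_simplex"
  shows "0 \<le> v \<bullet> s \<and> v \<bullet> s \<le> 1"
proof -
  have s: "\<forall>i. 0 \<le> s $ i" "(\<Sum>i\<in>UNIV. s $ i) = 1" using assms(2) unfolding unit_simplex_def by auto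
  have "v \<bullet> s \<le> (\<Sum>i\<in>UNIV. s $ i)" unfolding inner_vec_def using assms(1) s
    by (intro sum_mono) (auto intro: mult_left_le_one_le)
  then show ?thesis unfolding inner_vec_def using assms(1) s by (auto intro!: sum_nonneg)
qed

locale mrv =
  fixes M :: "'a measure" and X :: "'a \<Rightarrow> real ^ 'n" and \<gamma> :: real and \<Psi> :: "(real ^ 'n) measure"
  assumes prob: "prob_space M" and X_measurable[measurable]: "X \<in> borel_measurable M"
    and X_nonneg: "\<forall>\<omega>\<in>space M. \<forall>i. 0 \<le> X \<omega> $ i" and MRV: "MRV M X \<gamma> \<Psi>"
begin

sublocale prob_space M by (rule prob)

abbreviation radius :: "'a \<Rightarrow> real" where "radius \<omega> \<equiv> L1norm (X \<omega>)"

abbreviation angle :: "'a \<Rightarrow> real ^ 'n" where "angle \<omega> \<equiv> X \<omega> /\<^sub>R L1norm (X \<omega>)"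

lemma gamma_pos: "0 < \<gamma>"
  using MRV unfolding MRV_def by blast

lemma sets_Psi: "sets \<Psi> = sets (restrict_space borel unit_simplex)"
  using MRV unfolding MRV_def by blast

lemma space_Psi: "space \<Psi> = unit_simplex"
  using sets_eq_imp_space_eq[OF sets_Psi] by (simp add: space_restrict_space)

sublocale Psi: prob_space \<Psi>
  using MRV unfolding MRV_def by blast

lemma MRV_tendsto:
  assumes "0 < t" "S \<in> sets \<Psi>" "measure \<Psi> ((top_of_set unit_simplex) frontier_of S) = 0"
  shows "((\<lambda>x. measure M {\<omega>\<in>space M. t * x < radius \<omega> \<and> angle \<omega> \<in> S} / tail M radius x)
           \<longlongrightarrow> t powr (-\<gamma>) * measure \<Psi> S) at_top"
  using MRV assms unfolding MRV_def tail_def by blast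

lemma unit_simplex_borel[measurable]: "unit_simplex \<in> sets borel"
  by (rule borel_closed[OF closed_unit_simplex])

lemma in_sets_Psi: "B \<in> sets borel \<Longrightarrow> B \<subseteq> unit_simplex \<Longrightarrow> B \<in> sets \<Psi>"
  unfolding sets_Psi by (subst sets_restrict_space_iff) auto

lemma measurable_Psi: "g \<in> borel_measurable borel \<Longrightarrow> g \<in> borel_measurable \<Psi>"
  unfolding measurable_cong_sets[OF sets_Psi refl] by (rule measurable_restrict_space1)

lemma radius_measurable[measurable]: "radius \<in> borel_measurable M"
  by measurable

lemma angle_measurable[measurable]: "angle \<in> borel_measurable M"
  by measurable

lemma angle_in_unit_simplex: "\<omega> \<in> space M \<Longrightarrow> 0 < radius \<omega> \<Longrightarrow> angle \<omega> \<in> unit_simplex"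
  using X_nonneg by (intro L1norm_scaled_in_unit_simplex) (auto simp: L1norm_def)

lemma band_event_sets:
  assumes "B \<in> sets borel"
  shows "{\<omega>\<in>space M. x < c * radius \<omega> \<and> angle \<omega> \<in> B} \<in> sets M"
proof -
  have "{\<omega>\<in>space M. x < c * radius \<omega> \<and> angle \<omega> \<in> B} = {\<omega>\<in>space M. x < c * radius \<omega>} \<inter> (angle -` B \<inter> space M)"
    by auto
  then show ?thesis using measurable_sets[OF angle_measurable assms] by simp
qed

lemma regularly_varying_tail_radius: "regularly_varying (-\<gamma>) (tail M radius)"
proof -
  have simplex: "unit_simplex \<in> sets \<Psi>" "measure \<Psi> unit_simplex = 1"
    "(top_of_set unit_simplex) frontier_of unit_simplex = {}"
    using Psi.prob_space space_Psi sets.top[of \<Psi>] frontier_of_topspace[of "top_of_set unit_simplex"] by auto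
  have ratio: "((\<lambda>x. tail M radius (t * x) / tail M radius x) \<longlongrightarrow> t powr (-\<gamma>)) at_top" if "0 < t" for t
  proof -
    have "\<forall>\<^sub>F x in at_top. measure M {\<omega>\<in>space M. t * x < radius \<omega> \<and> angle \<omega> \<in> unit_simplex} / tail M radius x
        = tail M radius (t * x) / tail M radius x"
      using eventually_ge_at_top[of 0]
    proof eventually_elim
      case (elim x)
      have "{\<omega>\<in>space M. t * x < radius \<omega> \<and> angle \<omega> \<in> unit_simplex} = {\<omega>\<in>space M. t * x < radius \<omega>}"
        using elim \<open>0 < t\<close> by (auto intro!: angle_in_unit_simplex) (smt (verit) mult_nonneg_nonneg)
      then show ?case unfolding tail_def by simp
    qed
    moreover have "((\<lambda>x. measure M {\<omega>\<in>space M. t * x < radius \<omega> \<and> angle \<omega> \<in> unit_simplex} / tail M radius x)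
        \<longlongrightarrow> t powr (-\<gamma>)) at_top"
      using MRV_tendsto[OF that simplex(1)] by (simp add: simplex(2,3))
    ultimately show ?thesis by (rule Lim_transform_eventually[rotated])
  qed
  have "((\<lambda>x. tail M radius x / tail M radius x) \<longlongrightarrow> 1) at_top" using ratio[of 1] by simp
  then have "\<forall>\<^sub>F x in at_top. 0 < tail M radius x / tail M radius x" by (rule order_tendstoD) simp
  then have "\<forall>\<^sub>F x in at_top. 0 < tail M radius x"
    by eventually_elim (metis div_0 less_eq_real_def order.irrefl tail_nonneg)
  with ratio show ?thesis unfolding regularly_varying_def by blast
qed

lemma band_tail_ratio:
  assumes "0 < a" "B \<in> sets \<Psi>" "measure \<Psi> ((top_of_set unit_simplex) frontier_of B) = 0"
  shows "((\<lambda>x. measure M {\<omega>\<in>space M. x < a * radius \<omega> \<and> angle \<omega> \<in> B} / tail M radius x)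
           \<longlongrightarrow> a powr \<gamma> * measure \<Psi> B) at_top"
proof -
  have "x < a * r \<longleftrightarrow> (1 / a) * x < r" for x r using \<open>0 < a\<close> by (simp add: field_simps)
  moreover have "(1 / a) powr (-\<gamma>) = a powr \<gamma>" using \<open>0 < a\<close> by (simp add: powr_minus_divide powr_divide)
  ultimately show ?thesis using MRV_tendsto[of "1 / a", OF _ assms(2,3)] \<open>0 < a\<close> by simp
qed

lemma sum_band_tails_le_tail:
  fixes g :: "real ^ 'n \<Rightarrow> real" and B :: "nat \<Rightarrow> (real ^ 'n) set"
  assumes g[measurable]: "g \<in> borel_measurable borel"
    and B: "disjoint_family_on B {..<m}" "\<And>k. k < m \<Longrightarrow> B k \<in> sets borel"
    and lower: "\<And>k \<theta>. k < m \<Longrightarrow> \<theta> \<in> B k \<Longrightarrow> l k \<le> g \<theta>"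
  shows "(\<Sum>k<m. measure M {\<omega>\<in>space M. x < l k * radius \<omega> \<and> angle \<omega> \<in> B k})
    \<le> tail M (\<lambda>\<omega>. radius \<omega> * g (angle \<omega>)) x"
proof -
  define E where "E k = {\<omega>\<in>space M. x < l k * radius \<omega> \<and> angle \<omega> \<in> B k}" for k
  have E: "E k \<in> sets M" if "k < m" for k unfolding E_def using B(2)[OF that] by (rule band_event_sets)
  have "(\<Sum>k<m. measure M (E k)) = measure M (\<Union>k<m. E k)"
    using B(1) E by (intro finite_measure_finite_Union[symmetric]) (auto simp: disjoint_family_on_def E_def)
  also have "\<dots> \<le> tail M (\<lambda>\<omega>. radius \<omega> * g (angle \<omega>)) x" unfolding tail_def
  proof (rule finite_measure_mono)
    show "(\<Union>k<m. E k) \<subseteq> {\<omega>\<in>space M. x < radius \<omega> * g (angle \<omega>)}"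
    proof safe
      fix k \<omega> assume "k < m" "\<omega> \<in> E k"
      then have "x < l k * radius \<omega>" "l k \<le> g (angle \<omega>)" "\<omega> \<in> space M"
        using lower unfolding E_def by auto
      moreover have "l k * radius \<omega> \<le> radius \<omega> * g (angle \<omega>)"
        using mult_right_mono[OF calculation(2) L1norm_nonneg[of "X \<omega>"]] by (simp add: mult.commute)
      ultimately show "\<omega> \<in> space M" "x < radius \<omega> * g (angle \<omega>)" by auto
    qed
  qed measurable
  finally show ?thesis unfolding E_def .
qed

lemma tail_le_sum_band_tails:
  fixes g :: "real ^ 'n \<Rightarrow> real" and B :: "nat \<Rightarrow> (real ^ 'n) set"
  assumes g[measurable]: "g \<in> borel_measurable borel" and B: "\<And>k. k < m \<Longrightarrow> B k \<in> sets borel"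
    and upper: "\<And>k \<theta>. k < m \<Longrightarrow> \<theta> \<in> B k \<Longrightarrow> g \<theta> \<le> u k"
    and cover: "\<And>\<theta>. \<theta> \<in> unit_simplex \<Longrightarrow> g \<theta> \<le> u0 \<or> (\<exists>k<m. \<theta> \<in> B k)"
    and "0 \<le> x"
  shows "tail M (\<lambda>\<omega>. radius \<omega> * g (angle \<omega>)) x
    \<le> measure M {\<omega>\<in>space M. x < u0 * radius \<omega> \<and> angle \<omega> \<in> unit_simplex}
      + (\<Sum>k<m. measure M {\<omega>\<in>space M. x < u k * radius \<omega> \<and> angle \<omega> \<in> B k})"
proof -
  define E0 where "E0 = {\<omega>\<in>space M. x < u0 * radius \<omega> \<and> angle \<omega> \<in> unit_simplex}"
  define E where "E k = {\<omega>\<in>space M. x < u k * radius \<omega> \<and> angle \<omega> \<in> B k}" for k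
  have E0: "E0 \<in> sets M" unfolding E0_def by (rule band_event_sets) measurable
  have E: "E k \<in> sets M" if "k < m" for k unfolding E_def using B[OF that] by (rule band_event_sets)
  have "{\<omega>\<in>space M. x < radius \<omega> * g (angle \<omega>)} \<subseteq> E0 \<union> (\<Union>k<m. E k)"
  proof
    fix \<omega> assume "\<omega> \<in> {\<omega>\<in>space M. x < radius \<omega> * g (angle \<omega>)}"
    then have \<omega>: "\<omega> \<in> space M" "x < radius \<omega> * g (angle \<omega>)" by auto
    then have "radius \<omega> \<noteq> 0" using \<open>0 \<le> x\<close> by auto
    then have "0 < radius \<omega>" using L1norm_nonneg[of "X \<omega>"] by linarith
    then have "angle \<omega> \<in> unit_simplex" using \<omega>(1) by (intro angle_in_unit_simplex)
    have below: "x < c * radius \<omega>" if "g (angle \<omega>) \<le> c" for c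
    proof -
      have "radius \<omega> * g (angle \<omega>) \<le> c * radius \<omega>" using that \<open>0 < radius \<omega>\<close> by (simp add: mult.commute[of c])
      then show ?thesis using \<omega>(2) by linarith
    qed
    show "\<omega> \<in> E0 \<union> (\<Union>k<m. E k)"
    proof (cases "g (angle \<omega>) \<le> u0")
      case True
      then show ?thesis using below \<omega>(1) \<open>angle \<omega> \<in> unit_simplex\<close> unfolding E0_def by blast
    next
      case False
      then obtain k where "k < m" "angle \<omega> \<in> B k" using cover[OF \<open>angle \<omega> \<in> unit_simplex\<close>] by blast
      then show ?thesis using below[OF upper] \<omega>(1) unfolding E_def by blast
    qed
  qed
  then have "tail M (\<lambda>\<omega>. radius \<omega> * g (angle \<omega>)) x \<le> measure M (E0 \<union> (\<Union>k<m. E k))"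
    unfolding tail_def using E0 E by (intro finite_measure_mono) auto
  also have "\<dots> \<le> measure M E0 + measure M (\<Union>k<m. E k)" using E0 E by (intro measure_Un_le) auto
  also have "measure M (\<Union>k<m. E k) \<le> (\<Sum>k<m. measure M (E k))"
    using E by (intro finite_measure_subadditive_finite) auto
  finally show ?thesis unfolding E0_def E_def by simp
qed

lemma level_bands:
  fixes g :: "real ^ 'n \<Rightarrow> real" and a :: "nat \<Rightarrow> real"
  assumes g[measurable]: "g \<in> borel_measurable borel" and "strict_mono a"
  defines "B \<equiv> \<lambda>k. {\<theta>\<in>unit_simplex. a k < g \<theta> \<and> g \<theta> \<le> a (Suc k)}"
  shows "B k \<in> sets borel" and "B k \<in> sets \<Psi>" and "disjoint_family B"
proof -
  have "B k = unit_simplex \<inter> {\<theta>\<in>space borel. a k < g \<theta> \<and> g \<theta> \<le> a (Suc k)}" unfolding B_def by auto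
  also have "\<dots> \<in> sets borel" by measurable
  finally show B_borel: "B k \<in> sets borel" .
  moreover have "B k \<subseteq> unit_simplex" unfolding B_def by blast
  ultimately show "B k \<in> sets \<Psi>" by (rule in_sets_Psi)
  show "disjoint_family B" unfolding disjoint_family_on_def
  proof (intro ballI impI)
    fix k l :: nat assume "k \<noteq> l"
    then have "Suc k \<le> l \<or> Suc l \<le> k" by linarith
    then have "a (Suc k) \<le> a l \<or> a (Suc l) \<le> a k"
      using strict_mono_less_eq[OF \<open>strict_mono a\<close>] by blast
    then show "B k \<inter> B l = {}" unfolding B_def by auto
  qed
qed

lemma level_band_frontier_null:
  fixes g :: "real ^ 'n \<Rightarrow> real"
  assumes g_cont: "continuous_on UNIV g"
    and null: "measure \<Psi> {\<theta>\<in>space \<Psi>. g \<theta> = a} = 0" "measure \<Psi> {\<theta>\<in>space \<Psi>. g \<theta> = b} = 0"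
  shows "measure \<Psi> ((top_of_set unit_simplex) frontier_of {\<theta>\<in>unit_simplex. a < g \<theta> \<and> g \<theta> \<le> b}) = 0"
proof -
  have g: "g \<in> borel_measurable \<Psi>" using g_cont by (intro measurable_Psi borel_measurable_continuous_onI)
  let ?level = "\<lambda>c. {\<theta>\<in>space \<Psi>. g \<theta> = c}"
  have level_sets: "?level c \<in> sets \<Psi>" for c using g by measurable
  have "(top_of_set unit_simplex) frontier_of {\<theta>\<in>unit_simplex. a < g \<theta> \<and> g \<theta> \<le> b} \<subseteq> ?level a \<union> ?level b"
    using frontier_of_level_band[OF continuous_on_subset[OF g_cont]] space_Psi by blast
  then have "measure \<Psi> ((top_of_set unit_simplex) frontier_of {\<theta>\<in>unit_simplex. a < g \<theta> \<and> g \<theta> \<le> b})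
      \<le> measure \<Psi> (?level a \<union> ?level b)"
    using level_sets by (intro Psi.finite_measure_mono) auto
  also have "\<dots> \<le> measure \<Psi> (?level a) + measure \<Psi> (?level b)"
    using level_sets by (intro measure_Un_le) auto
  finally show ?thesis using null by (simp add: measure_le_0_iff)
qed

lemma integral_powr_between_band_sums:
  fixes g :: "real ^ 'n \<Rightarrow> real" and a :: "nat \<Rightarrow> real"
  assumes g[measurable]: "g \<in> borel_measurable borel"
    and g01: "\<And>\<theta>. \<theta> \<in> unit_simplex \<Longrightarrow> 0 \<le> g \<theta> \<and> g \<theta> \<le> 1"
    and a: "strict_mono a" "0 < a 0" "1 < a m" "a 0 powr \<gamma> \<le> \<epsilon>" "\<And>k. a (Suc k) powr \<gamma> - a k powr \<gamma> \<le> \<epsilon>"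
  defines "B \<equiv> \<lambda>k. {\<theta>\<in>unit_simplex. a k < g \<theta> \<and> g \<theta> \<le> a (Suc k)}"
  shows "(\<integral>\<theta>. g \<theta> powr \<gamma> \<partial>\<Psi>) - 2 * \<epsilon> \<le> (\<Sum>k<m. a k powr \<gamma> * measure \<Psi> (B k))"
    and "a 0 powr \<gamma> + (\<Sum>k<m. a (Suc k) powr \<gamma> * measure \<Psi> (B k)) \<le> (\<integral>\<theta>. g \<theta> powr \<gamma> \<partial>\<Psi>) + 2 * \<epsilon>"
proof -
  have B_sets: "B k \<in> sets \<Psi>" "disjoint_family B" for k
    unfolding B_def by (rule level_bands[OF g a(1)])+
  have a_pos: "0 < a k" for k using strict_mono_less_eq[OF a(1), of 0 k] a(2) by simp
  have "integrable \<Psi> (\<lambda>\<theta>. g \<theta> powr \<gamma>)"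
  proof (rule Psi.integrable_const_bound[where B=1])
    have "g \<theta> powr \<gamma> \<le> 1 powr \<gamma>" if "\<theta> \<in> space \<Psi>" for \<theta>
      using g01[of \<theta>] gamma_pos that by (intro powr_mono2) (auto simp: space_Psi)
    then show "AE \<theta> in \<Psi>. norm (g \<theta> powr \<gamma>) \<le> 1" by (intro AE_I2) simp
  qed (intro measurable_Psi, measurable)
  moreover have "disjoint_family_on B {..<m}" using B_sets(2) by (rule disjoint_family_on_mono[rotated]) simp
  moreover have "a k powr \<gamma> \<le> g \<theta> powr \<gamma> \<and> g \<theta> powr \<gamma> \<le> a (Suc k) powr \<gamma>
      \<and> a (Suc k) powr \<gamma> \<le> a k powr \<gamma> + \<epsilon>" if "\<theta> \<in> B k" for k \<theta>
    using that a_pos[of k] a(5)[of k] gamma_pos unfolding B_def by (auto intro!: powr_mono2)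
  moreover have "0 \<le> g \<theta> powr \<gamma> \<and> g \<theta> powr \<gamma> \<le> a 0 powr \<gamma>"
    if "\<theta> \<in> space \<Psi>" "\<forall>k<m. \<theta> \<notin> B k" for \<theta>
  proof -
    have "\<theta> \<in> unit_simplex" using that(1) space_Psi by simp
    then have "g \<theta> \<le> a 0" using le_first_or_crossing_step[of "g \<theta>" a m] g01 a(3) that(2)
      unfolding B_def by fastforce
    then show ?thesis using g01[OF \<open>\<theta> \<in> unit_simplex\<close>] gamma_pos by (auto intro: powr_mono2)
  qed
  ultimately show "(\<integral>\<theta>. g \<theta> powr \<gamma> \<partial>\<Psi>) - 2 * \<epsilon> \<le> (\<Sum>k<m. a k powr \<gamma> * measure \<Psi> (B k))"
    and "a 0 powr \<gamma> + (\<Sum>k<m. a (Suc k) powr \<gamma> * measure \<Psi> (B k)) \<le> (\<integral>\<theta>. g \<theta> powr \<gamma> \<partial>\<Psi>) + 2 * \<epsilon>"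
    using Psi.integral_band_sums_approx[of "\<lambda>\<theta>. g \<theta> powr \<gamma>" B m "\<lambda>k. a k powr \<gamma>" "\<lambda>k. a (Suc k) powr \<gamma>" \<epsilon>
        "a 0 powr \<gamma>"] B_sets(1) a(4) by auto
qed

theorem tail_ratio_tendsto_integral:
  fixes g :: "real ^ 'n \<Rightarrow> real"
  assumes g_cont: "continuous_on UNIV g" and g01: "\<And>\<theta>. \<theta> \<in> unit_simplex \<Longrightarrow> 0 \<le> g \<theta> \<and> g \<theta> \<le> 1"
  shows "((\<lambda>x. tail M (\<lambda>\<omega>. radius \<omega> * g (angle \<omega>)) x / tail M radius x) \<longlongrightarrow> (\<integral>\<theta>. g \<theta> powr \<gamma> \<partial>\<Psi>)) at_top"
proof (rule tendsto_sandwich_approx)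
  fix \<epsilon> :: real assume "0 < \<epsilon>"
  let ?I = "\<integral>\<theta>. g \<theta> powr \<gamma> \<partial>\<Psi>" and ?V = "tail M radius" and ?T = "tail M (\<lambda>\<omega>. radius \<omega> * g (angle \<omega>))"
  have g[measurable]: "g \<in> borel_measurable borel" using g_cont by (rule borel_measurable_continuous_onI)
  obtain a m where a: "strict_mono a" "0 < a 0" "1 < a m" "a 0 powr \<gamma> \<le> \<epsilon> / 2"
      "\<And>k. a (Suc k) powr \<gamma> - a k powr \<gamma> \<le> \<epsilon> / 2"
    and a_null: "\<And>k. measure \<Psi> {\<theta>\<in>space \<Psi>. g \<theta> = a k} = 0"
    using Psi.exists_null_level_grid[OF measurable_Psi[OF g] gamma_pos, of "\<epsilon> / 2"] \<open>0 < \<epsilon>\<close> by auto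
  have a_pos: "0 < a k" for k using strict_mono_less_eq[OF a(1), of 0 k] a(2) by simp
  define B where "B k = {\<theta>\<in>unit_simplex. a k < g \<theta> \<and> g \<theta> \<le> a (Suc k)}" for k
  note bands = level_bands[OF g a(1), folded B_def]
  have B_null: "measure \<Psi> ((top_of_set unit_simplex) frontier_of B k) = 0" for k
    unfolding B_def by (rule level_band_frontier_null[OF g_cont a_null a_null])
  have "(top_of_set unit_simplex) frontier_of (unit_simplex :: (real ^ 'n) set) = {}"
    by (metis frontier_of_topspace topspace_euclidean_subtopology)
  then have simplex: "unit_simplex \<in> sets \<Psi>" "measure \<Psi> unit_simplex = 1"
    "measure \<Psi> ((top_of_set unit_simplex) frontier_of unit_simplex) = 0"
    using Psi.prob_space space_Psi sets.top[of \<Psi>] by simp_all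
  define fl where "fl x = (\<Sum>k<m. measure M {\<omega>\<in>space M. x < a k * radius \<omega> \<and> angle \<omega> \<in> B k}) / ?V x" for x
  define fu where "fu x = (measure M {\<omega>\<in>space M. x < a 0 * radius \<omega> \<and> angle \<omega> \<in> unit_simplex}
      + (\<Sum>k<m. measure M {\<omega>\<in>space M. x < a (Suc k) * radius \<omega> \<and> angle \<omega> \<in> B k})) / ?V x" for x
  have "(fl \<longlongrightarrow> (\<Sum>k<m. a k powr \<gamma> * measure \<Psi> (B k))) at_top"
    unfolding fl_def sum_divide_distrib by (intro tendsto_sum band_tail_ratio a_pos bands B_null)
  moreover have "(fu \<longlongrightarrow> a 0 powr \<gamma> + (\<Sum>k<m. a (Suc k) powr \<gamma> * measure \<Psi> (B k))) at_top"
    using band_tail_ratio[OF a(2) simplex(1,3)] simplex(2)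
    unfolding fu_def add_divide_distrib sum_divide_distrib
    by (intro tendsto_add tendsto_sum band_tail_ratio a_pos bands B_null) simp_all
  moreover have "\<forall>\<^sub>F x in at_top. fl x \<le> ?T x / ?V x \<and> ?T x / ?V x \<le> fu x"
    using eventually_ge_at_top[of 0]
      regularly_varying_eventually_pos[OF regularly_varying_tail_radius filterlim_ident]
  proof eventually_elim
    case (elim x)
    have disj: "disjoint_family_on B {..<m}" using bands(3) by (rule disjoint_family_on_mono[rotated]) simp
    have "fl x \<le> ?T x / ?V x" unfolding fl_def using elim
      by (intro divide_right_mono sum_band_tails_le_tail[OF g disj bands(1)]) (auto simp: B_def)
    moreover have "g \<theta> \<le> a 0 \<or> (\<exists>k<m. \<theta> \<in> B k)" if "\<theta> \<in> unit_simplex" for \<theta>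
      using le_first_or_crossing_step[of "g \<theta>" a m] g01[OF that] a(3) that unfolding B_def by force
    then have "?T x / ?V x \<le> fu x" unfolding fu_def using elim
      by (intro divide_right_mono tail_le_sum_band_tails[OF g bands(1)]) (auto simp: B_def)
    ultimately show ?case by blast
  qed
  moreover have "?I - \<epsilon> \<le> (\<Sum>k<m. a k powr \<gamma> * measure \<Psi> (B k))"
    "a 0 powr \<gamma> + (\<Sum>k<m. a (Suc k) powr \<gamma> * measure \<Psi> (B k)) \<le> ?I + \<epsilon>"
    using integral_powr_between_band_sums[OF g g01 a] unfolding B_def by simp_all
  ultimately show "\<exists>lo up fl fu. ?I - \<epsilon> \<le> lo \<and> up \<le> ?I + \<epsilon> \<and> (fl \<longlongrightarrow> lo) at_top \<and> (fu \<longlongrightarrow> up) at_top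
      \<and> (\<forall>\<^sub>F x in at_top. fl x \<le> ?T x / ?V x \<and> ?T x / ?V x \<le> fu x)"
    by blast
qed

corollary tail_inner_ratio_tendsto_eta:
  assumes "\<forall>i. 0 \<le> v $ i \<and> v $ i \<le> 1"
  shows "((\<lambda>x. tail M (\<lambda>\<omega>. v \<bullet> X \<omega>) x / tail M radius x) \<longlongrightarrow> eta \<Psi> \<gamma> v) at_top"
proof -
  have "((\<lambda>x. tail M (\<lambda>\<omega>. radius \<omega> * (v \<bullet> angle \<omega>)) x / tail M radius x) \<longlongrightarrow> (\<integral>\<theta>. (v \<bullet> \<theta>) powr \<gamma> \<partial>\<Psi>)) at_top"
    using inner_unit_simplex_bounds[OF assms] by (intro tail_ratio_tendsto_integral continuous_intros)
  then show ?thesis unfolding L1norm_mult_inner_scaled eta_def .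
qed

end

lemma eta_axis: "0 \<le> a \<Longrightarrow> eta \<Psi> \<gamma> (axis i a) = a powr \<gamma> * eta \<Psi> \<gamma> (axis i 1)"
  unfolding eta_def by (simp add: inner_axis' powr_mult)

lemma unit_simplex_nth_bounds: "w \<in> unit_simplex \<Longrightarrow> 0 \<le> w $ i \<and> w $ i \<le> 1"
  unfolding unit_simplex_def using member_le_sum[of i UNIV "\<lambda>i. w $ i"] by auto

lemma unit_simplex_exists_pos:
  assumes "w \<in> unit_simplex"
  shows "\<exists>k. 0 < w $ k"
proof (rule ccontr)
  assume "\<nexists>k. 0 < w $ k"
  then have "\<forall>i. w $ i = 0" using assms unfolding unit_simplex_def by (simp add: order.antisym not_less)
  then show False using assms unfolding unit_simplex_def by simp
qed

lemma hadamard_nth: "hadamard w X \<omega> $ i = axis i (w $ i) \<bullet> X \<omega>"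
  unfolding hadamard_def by (simp add: inner_axis')

lemma sum_hadamard: "(\<Sum>i\<in>UNIV. hadamard w X \<omega> $ i) = w \<bullet> X \<omega>"
  unfolding hadamard_def inner_vec_def by simp

lemma hadamard_measurable:
  fixes X :: "'a \<Rightarrow> real ^ 'n"
  assumes "X \<in> borel_measurable M"
  shows "hadamard w X \<in> borel_measurable M"
proof -
  have "(\<lambda>x :: real ^ 'n. \<chi> i. w $ i * x $ i) \<in> borel_measurable borel"
    by (intro borel_measurable_continuous_onI continuous_intros)
  from measurable_compose[OF assms this] show ?thesis unfolding hadamard_def .
qed

theorem proposition3:
  fixes M :: "'a measure" and X :: "'a \<Rightarrow> real ^ 'n" and \<gamma> :: real
    and \<Psi> :: "(real ^ 'n) measure" and w :: "real ^ 'n"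
    and f :: "real ^ 'n \<Rightarrow> ennreal"
  assumes "prob_space M" and "atomless M"
    and "X \<in> borel_measurable M"
    and "\<forall>\<omega> \<in> space M. \<forall>i. 0 \<le> X \<omega> $ i"
    and "MRV M X \<gamma> \<Psi>"
    and "distributed M lborel X f"
    and "\<forall>x \<in> support M X. f x > 0"
    and "w \<in> unit_simplex"
    and "eta \<Psi> \<gamma> w > 0"
    and "\<forall>i. eta \<Psi> \<gamma> (axis i 1) > 0"
  shows "((\<lambda>\<alpha>. DQ_VaR M \<alpha> (hadamard w X)) \<longlongrightarrow>
           eta \<Psi> \<gamma> w / (\<Sum>i\<in>UNIV. w $ i * eta \<Psi> \<gamma> (axis i 1) powr (1 / \<gamma>)) powr \<gamma>)
         (at_right 0)"
proof -
  interpret mrv M X \<gamma> \<Psi> using assms(1,3,4,5) by (rule mrv.intro)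
  have w: "0 \<le> w $ i \<and> w $ i \<le> 1" for i using unit_simplex_nth_bounds[OF assms(8)] .
  obtain k where "0 < w $ k" using unit_simplex_exists_pos[OF assms(8)] ..
  have eta_w_axis: "eta \<Psi> \<gamma> (axis i (w $ i)) = w $ i powr \<gamma> * eta \<Psi> \<gamma> (axis i 1)" for i
    by (rule eta_axis) (use w in simp)
  have "((\<lambda>\<alpha>. DQ_VaR M \<alpha> (hadamard w X)) \<longlongrightarrow>
      eta \<Psi> \<gamma> w / (\<Sum>i\<in>UNIV. eta \<Psi> \<gamma> (axis i (w $ i)) powr (1 / \<gamma>)) powr \<gamma>) (at_right 0)"
  proof (rule DQ_VaR_tendsto_of_tail_ratios[OF prob hadamard_measurable[OF X_measurable] _ gamma_pos
        regularly_varying_tail_radius])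
    show "\<forall>\<omega>\<in>space M. \<forall>i. 0 \<le> hadamard w X \<omega> $ i" using X_nonneg w unfolding hadamard_def by simp
    show "((\<lambda>x. tail M (\<lambda>\<omega>. hadamard w X \<omega> $ i) x / tail M radius x) \<longlongrightarrow> eta \<Psi> \<gamma> (axis i (w $ i))) at_top" for i
      unfolding hadamard_nth using w by (intro tail_inner_ratio_tendsto_eta) (simp add: axis_def)
    show "((\<lambda>x. tail M (\<lambda>\<omega>. \<Sum>i\<in>UNIV. hadamard w X \<omega> $ i) x / tail M radius x) \<longlongrightarrow> eta \<Psi> \<gamma> w) at_top"
      unfolding sum_hadamard using w by (intro tail_inner_ratio_tendsto_eta) simp
    show "0 < eta \<Psi> \<gamma> (axis k (w $ k))" using assms(10) \<open>0 < w $ k\<close> by (simp add: eta_w_axis)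
  qed
  moreover have "eta \<Psi> \<gamma> (axis i (w $ i)) powr (1 / \<gamma>) = w $ i * eta \<Psi> \<gamma> (axis i 1) powr (1 / \<gamma>)" for i
    using w gamma_pos by (simp add: eta_w_axis powr_mult powr_powr)
  ultimately show ?thesis by simp
qed

end
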